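(* Let $m\ge 1$ and let $\Omega\subset\mathbb{R}^m$ be a non-empty open set with $|\Omega|<\infty$. If $1\le p\le 2$, then $$F_p(\Omega)\le F_1(\Omega)^{1/p}\le 1.$$
   Context: For a non-empty open $\Omega\subset\mathbb{R}^m$ with $|\Omega|<\infty$, $\lambda_1(\Omega)=\inf_{\varphi\in H_0^1(\Omega)\setminus\{0\}}\int_\Omega|D\varphi|^2/\int_\Omega\varphi^2$, and $v_\Omega$ is the unique solution of $-\Delta v=1$, $v\in H_0^1(\Omega)$. For $1\le p<\infty$, $T_p(\Omega)=\|v_\Omega\|_{L^p(\Omega)}$ and $F_p(\Omega)=T_p(\Omega)\lambda_1(\Omega)/|\Omega|^{1/p}$. *)

theory Defs
  imports "HOL-Analysis.Analysis"
begin

text \<open>Domains are subsets of a Euclidean space 'a (playing the role of R^m, m = DIM('a) \<ge> 1).\<close>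

definition grad :: "('a::euclidean_space \<Rightarrow> real) \<Rightarrow> 'a \<Rightarrow> 'a" where
  "grad f x = (\<Sum>b\<in>Basis. frechet_derivative f (at x) b *\<^sub>R b)"

fun Ck :: "nat \<Rightarrow> ('a::euclidean_space \<Rightarrow> real) \<Rightarrow> bool" where
  "Ck 0 f = continuous_on UNIV f"
| "Ck (Suc k) f = (f differentiable_on UNIV \<and>
      (\<forall>b\<in>Basis. Ck k (\<lambda>x. frechet_derivative f (at x) b)))"

definition smooth_fun :: "('a::euclidean_space \<Rightarrow> real) \<Rightarrow> bool" where
  "smooth_fun f \<longleftrightarrow> (\<forall>k. Ck k f)"

definition test_fun :: "'a::euclidean_space set \<Rightarrow> ('a \<Rightarrow> real) \<Rightarrow> bool" where
  "test_fun \<Omega> \<phi> \<longleftrightarrow> smooth_fun \<phi> \<and> compact (closure {x. \<phi> x \<noteq> 0})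
      \<and> closure {x. \<phi> x \<noteq> 0} \<subseteq> \<Omega>"

text \<open>H^1_0(\<Omega>) as the closure of C_c^\<infinity>(\<Omega>) in the H^1 norm:
  \<open>H01 \<Omega> u G\<close> means u \<in> H^1_0(\<Omega>) with (weak) gradient G.\<close>
definition H01 :: "'a::euclidean_space set \<Rightarrow> ('a \<Rightarrow> real) \<Rightarrow> ('a \<Rightarrow> 'a) \<Rightarrow> bool" where
  "H01 \<Omega> u G \<longleftrightarrow>
     set_borel_measurable lebesgue \<Omega> u \<and> set_borel_measurable lebesgue \<Omega> G \<and>
     set_integrable lebesgue \<Omega> (\<lambda>x. (u x)\<^sup>2) \<and>
     set_integrable lebesgue \<Omega> (\<lambda>x. (norm (G x))\<^sup>2) \<and>
     (\<exists>\<phi>::nat \<Rightarrow> 'a \<Rightarrow> real. (\<forall>n. test_fun \<Omega> (\<phi> n)) \<and>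
        (\<lambda>n. LINT x:\<Omega>|lebesgue. (\<phi> n x - u x)\<^sup>2) \<longlonglongrightarrow> 0 \<and>
        (\<lambda>n. LINT x:\<Omega>|lebesgue. (norm (grad (\<phi> n) x - G x))\<^sup>2) \<longlonglongrightarrow> 0)"

definition lambda1 :: "'a::euclidean_space set \<Rightarrow> real" where
  "lambda1 \<Omega> = Inf {(LINT x:\<Omega>|lebesgue. (norm (G x))\<^sup>2) / (LINT x:\<Omega>|lebesgue. (u x)\<^sup>2) | u G.
      H01 \<Omega> u G \<and> \<not> (AE x in lebesgue. x \<in> \<Omega> \<longrightarrow> u x = 0)}"

text \<open>v is the (weak) solution of -\<Delta>v = 1, v \<in> H^1_0(\<Omega>), with gradient G.\<close>
definition torsion_fun :: "'a::euclidean_space set \<Rightarrow> ('a \<Rightarrow> real) \<Rightarrow> ('a \<Rightarrow> 'a) \<Rightarrow> bool" where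
  "torsion_fun \<Omega> v G \<longleftrightarrow> H01 \<Omega> v G \<and>
     (\<forall>\<phi>. test_fun \<Omega> \<phi> \<longrightarrow>
        (LINT x:\<Omega>|lebesgue. G x \<bullet> grad \<phi> x) = (LINT x:\<Omega>|lebesgue. \<phi> x))"

definition Tp :: "real \<Rightarrow> 'a::euclidean_space set \<Rightarrow> ('a \<Rightarrow> real) \<Rightarrow> real" where
  "Tp p \<Omega> v = (LINT x:\<Omega>|lebesgue. \<bar>v x\<bar> powr p) powr (1 / p)"

definition Fp :: "real \<Rightarrow> 'a::euclidean_space set \<Rightarrow> ('a \<Rightarrow> real) \<Rightarrow> real" where
  "Fp p \<Omega> v = Tp p \<Omega> v * lambda1 \<Omega> / (measure lebesgue \<Omega>) powr (1 / p)"

end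

theory Submission
  imports Defs
begin

text \<open>Testing the weak equation \<open>-\<Delta>v = 1\<close> against the test functions approximating \<open>v\<close> in
  \<open>H\<^sub>0\<^sup>1\<close> and passing to the limit gives \<open>\<integral> |\<nabla>v|\<^sup>2 = \<integral> v\<close>, so the Rayleigh quotient yields
  \<open>\<lambda>\<^sub>1 \<integral> v\<^sup>2 \<le> \<integral> |v|\<close>. With Cauchy-Schwarz, \<open>(\<integral> |v|)\<^sup>2 \<le> |\<Omega>| \<integral> v\<^sup>2\<close>, this becomes
  \<open>\<lambda>\<^sub>1 T\<^sub>1 \<le> |\<Omega>|\<close>, i.e. \<open>F\<^sub>1 \<le> 1\<close>. Young's inequality in the form
  \<open>\<lambda> powr (p - 1) * |v| powr p \<le> (2 - p) |v| + (p - 1) \<lambda> v\<^sup>2\<close> integrates to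
  \<open>\<lambda>\<^sub>1 powr (p - 1) * T\<^sub>p powr p \<le> T\<^sub>1\<close>, which is \<open>F\<^sub>p powr p \<le> F\<^sub>1\<close>.\<close>

lemma abs_mult_le_sum_squares: "\<bar>(a::real) * b\<bar> \<le> a\<^sup>2 + b\<^sup>2"
proof -
  have "2 * \<bar>a\<bar> * \<bar>b\<bar> \<le> a\<^sup>2 + b\<^sup>2"
    using sum_squares_bound[of "\<bar>a\<bar>" "\<bar>b\<bar>"] by (simp only: power2_abs)
  moreover have "0 \<le> \<bar>a\<bar> * \<bar>b\<bar>" by simp
  ultimately show ?thesis unfolding abs_mult by linarith
qed

lemma integrable_mult_if_square_integrable:
  fixes f g :: "'a \<Rightarrow> real"
  assumes [measurable]: "f \<in> borel_measurable M" "g \<in> borel_measurable M"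
    and "integrable M (\<lambda>x. (f x)\<^sup>2)" "integrable M (\<lambda>x. (g x)\<^sup>2)"
  shows "integrable M (\<lambda>x. f x * g x)"
  by (rule Bochner_Integration.integrable_bound[where f = "\<lambda>x. (f x)\<^sup>2 + (g x)\<^sup>2"])
     (use assms in \<open>auto intro!: AE_I2 abs_mult_le_sum_squares\<close>)

lemma Cauchy_Schwarz_integral:
  fixes f g :: "'a \<Rightarrow> real"
  assumes [measurable]: "f \<in> borel_measurable M" "g \<in> borel_measurable M"
    and f2: "integrable M (\<lambda>x. (f x)\<^sup>2)" and g2: "integrable M (\<lambda>x. (g x)\<^sup>2)"
  shows "(\<integral>x. \<bar>f x * g x\<bar> \<partial>M)\<^sup>2 \<le> (\<integral>x. (f x)\<^sup>2 \<partial>M) * (\<integral>x. (g x)\<^sup>2 \<partial>M)"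
proof -
  have fg: "integrable M (\<lambda>x. \<bar>f x * g x\<bar>)"
    using integrable_mult_if_square_integrable[OF assms] by (rule integrable_abs)
  have "ennreal ((\<integral>x. \<bar>f x * g x\<bar> \<partial>M)\<^sup>2) = (\<integral>\<^sup>+x. ennreal \<bar>f x\<bar> * ennreal \<bar>g x\<bar> \<partial>M)\<^sup>2"
    using nn_integral_eq_integral[OF fg] by (simp add: ennreal_power abs_mult ennreal_mult)
  also have "\<dots> \<le> (\<integral>\<^sup>+x. ennreal \<bar>f x\<bar> ^ 2 \<partial>M) * (\<integral>\<^sup>+x. ennreal \<bar>g x\<bar> ^ 2 \<partial>M)"
    by (rule Cauchy_Schwarz_nn_integral) measurable
  also have "\<dots> = ennreal ((\<integral>x. (f x)\<^sup>2 \<partial>M) * (\<integral>x. (g x)\<^sup>2 \<partial>M))"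
    using nn_integral_eq_integral[OF f2] nn_integral_eq_integral[OF g2]
    by (simp add: ennreal_power power2_abs ennreal_mult)
  finally have "ennreal ((\<integral>x. \<bar>f x * g x\<bar> \<partial>M)\<^sup>2)
      \<le> ennreal ((\<integral>x. (f x)\<^sup>2 \<partial>M) * (\<integral>x. (g x)\<^sup>2 \<partial>M))" .
  moreover have "0 \<le> (\<integral>x. (f x)\<^sup>2 \<partial>M) * (\<integral>x. (g x)\<^sup>2 \<partial>M)"
    by (intro mult_nonneg_nonneg integral_nonneg_AE) auto
  ultimately show ?thesis by (rule ennreal_le_iff[THEN iffD1, rotated])
qed

lemma integrable_inner_if_square_integrable:
  fixes f g :: "'a \<Rightarrow> 'b::euclidean_space"
  assumes [measurable]: "f \<in> borel_measurable M" "g \<in> borel_measurable M"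
    and "integrable M (\<lambda>x. (norm (f x))\<^sup>2)" "integrable M (\<lambda>x. (norm (g x))\<^sup>2)"
  shows "integrable M (\<lambda>x. f x \<bullet> g x)"
proof (rule Bochner_Integration.integrable_bound)
  show "integrable M (\<lambda>x. norm (f x) * norm (g x))"
    by (rule integrable_mult_if_square_integrable) (use assms in auto)
  show "AE x in M. norm (f x \<bullet> g x) \<le> norm (norm (f x) * norm (g x))"
    by (intro AE_I2) (simp add: Cauchy_Schwarz_ineq2)
qed measurable

lemma abs_integral_inner_le:
  fixes f g :: "'a \<Rightarrow> 'b::euclidean_space"
  assumes [measurable]: "f \<in> borel_measurable M" "g \<in> borel_measurable M"
    and f2: "integrable M (\<lambda>x. (norm (f x))\<^sup>2)" and g2: "integrable M (\<lambda>x. (norm (g x))\<^sup>2)"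
  shows "\<bar>\<integral>x. f x \<bullet> g x \<partial>M\<bar>
    \<le> sqrt (\<integral>x. (norm (f x))\<^sup>2 \<partial>M) * sqrt (\<integral>x. (norm (g x))\<^sup>2 \<partial>M)"
proof -
  have fg: "integrable M (\<lambda>x. norm (f x) * norm (g x))"
    by (rule integrable_mult_if_square_integrable) (use f2 g2 in auto)
  have "\<bar>\<integral>x. f x \<bullet> g x \<partial>M\<bar> \<le> (\<integral>x. \<bar>f x \<bullet> g x\<bar> \<partial>M)"
    by (rule integral_abs_bound)
  also have "\<dots> \<le> (\<integral>x. \<bar>norm (f x) * norm (g x)\<bar> \<partial>M)"
    by (rule integral_mono') (use fg in \<open>auto simp: Cauchy_Schwarz_ineq2\<close>)
  also have "\<dots> = sqrt ((\<integral>x. \<bar>norm (f x) * norm (g x)\<bar> \<partial>M)\<^sup>2)"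
    by (simp add: integral_nonneg_AE)
  also have "\<dots> \<le> sqrt ((\<integral>x. (norm (f x))\<^sup>2 \<partial>M) * (\<integral>x. (norm (g x))\<^sup>2 \<partial>M))"
    by (intro real_sqrt_le_mono Cauchy_Schwarz_integral) (use f2 g2 in auto)
  finally show ?thesis by (simp add: real_sqrt_mult)
qed

lemma square_integrable_diff:
  fixes f g :: "'a \<Rightarrow> 'b::euclidean_space"
  assumes [measurable]: "f \<in> borel_measurable M" "g \<in> borel_measurable M"
    and "integrable M (\<lambda>x. (norm (f x))\<^sup>2)" "integrable M (\<lambda>x. (norm (g x))\<^sup>2)"
  shows "integrable M (\<lambda>x. (norm (f x - g x))\<^sup>2)"
proof (rule Bochner_Integration.integrable_bound)
  show "integrable M (\<lambda>x. 2 * (norm (f x))\<^sup>2 + 2 * (norm (g x))\<^sup>2)" using assms by simp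
  show "AE x in M. norm ((norm (f x - g x))\<^sup>2) \<le> norm (2 * (norm (f x))\<^sup>2 + 2 * (norm (g x))\<^sup>2)"
  proof (rule AE_I2)
    fix x
    have "(norm (f x - g x))\<^sup>2 \<le> (norm (f x) + norm (g x))\<^sup>2"
      by (simp add: power_mono norm_triangle_ineq4)
    also have "\<dots> \<le> 2 * (norm (f x))\<^sup>2 + 2 * (norm (g x))\<^sup>2"
      using sum_squares_bound[of "norm (f x)" "norm (g x)"] by (simp add: power2_sum)
    finally show "norm ((norm (f x - g x))\<^sup>2) \<le> norm (2 * (norm (f x))\<^sup>2 + 2 * (norm (g x))\<^sup>2)"
      by simp
  qed
qed measurable

lemma tendsto_integral_inner_if_L2_convergent:
  fixes h F :: "'a \<Rightarrow> 'b::euclidean_space" and Fs :: "nat \<Rightarrow> 'a \<Rightarrow> 'b"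
  assumes [measurable]: "h \<in> borel_measurable M" "F \<in> borel_measurable M" "\<And>n. Fs n \<in> borel_measurable M"
    and h2: "integrable M (\<lambda>x. (norm (h x))\<^sup>2)" and F2: "integrable M (\<lambda>x. (norm (F x))\<^sup>2)"
    and Fs2: "\<And>n. integrable M (\<lambda>x. (norm (Fs n x))\<^sup>2)"
    and L2: "(\<lambda>n. \<integral>x. (norm (Fs n x - F x))\<^sup>2 \<partial>M) \<longlonglongrightarrow> 0"
  shows "(\<lambda>n. \<integral>x. h x \<bullet> Fs n x \<partial>M) \<longlonglongrightarrow> (\<integral>x. h x \<bullet> F x \<partial>M)"
proof (rule LIM_zero_cancel, rule Lim_null_comparison)
  show "\<forall>\<^sub>F n in sequentially. norm ((\<integral>x. h x \<bullet> Fs n x \<partial>M) - (\<integral>x. h x \<bullet> F x \<partial>M))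
      \<le> sqrt (\<integral>x. (norm (h x))\<^sup>2 \<partial>M) * sqrt (\<integral>x. (norm (Fs n x - F x))\<^sup>2 \<partial>M)"
  proof (intro always_eventually allI)
    fix n
    have diff2: "integrable M (\<lambda>x. (norm (Fs n x - F x))\<^sup>2)"
      by (rule square_integrable_diff) (use Fs2 F2 in auto)
    have "(\<integral>x. h x \<bullet> Fs n x \<partial>M) - (\<integral>x. h x \<bullet> F x \<partial>M) = (\<integral>x. h x \<bullet> (Fs n x - F x) \<partial>M)"
      using integrable_inner_if_square_integrable[OF _ _ h2 Fs2] integrable_inner_if_square_integrable[OF _ _ h2 F2]
      by (simp add: inner_diff_right)
    then show "norm ((\<integral>x. h x \<bullet> Fs n x \<partial>M) - (\<integral>x. h x \<bullet> F x \<partial>M))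
        \<le> sqrt (\<integral>x. (norm (h x))\<^sup>2 \<partial>M) * sqrt (\<integral>x. (norm (Fs n x - F x))\<^sup>2 \<partial>M)"
      using abs_integral_inner_le[of h M "\<lambda>x. Fs n x - F x", OF _ _ h2 diff2] by simp
  qed
  show "(\<lambda>n. sqrt (\<integral>x. (norm (h x))\<^sup>2 \<partial>M) * sqrt (\<integral>x. (norm (Fs n x - F x))\<^sup>2 \<partial>M)) \<longlonglongrightarrow> 0"
    using tendsto_mult_right_zero[OF tendsto_real_sqrt[OF L2, unfolded real_sqrt_zero]] by simp
qed

lemma set_integral_eq_integral_lebesgue_on:
  fixes f :: "'a::euclidean_space \<Rightarrow> 'b::{banach, second_countable_topology}"
  shows "S \<in> sets lebesgue \<Longrightarrow> set_lebesgue_integral lebesgue S f = integral\<^sup>L (lebesgue_on S) f"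
  by (simp add: set_lebesgue_integral_def integral_restrict_space)

lemma set_integrable_iff_integrable_lebesgue_on:
  fixes f :: "'a::euclidean_space \<Rightarrow> 'b::{banach, second_countable_topology}"
  shows "S \<in> sets lebesgue \<Longrightarrow> set_integrable lebesgue S f \<longleftrightarrow> integrable (lebesgue_on S) f"
  by (simp add: set_integrable_def integrable_restrict_space)

lemma set_borel_measurable_iff_lebesgue_on:
  fixes f :: "'a::euclidean_space \<Rightarrow> 'b::{banach, second_countable_topology}"
  shows "S \<in> sets lebesgue \<Longrightarrow> set_borel_measurable lebesgue S f \<longleftrightarrow> f \<in> borel_measurable (lebesgue_on S)"
  by (simp add: set_borel_measurable_def borel_measurable_restrict_space_iff)

lemma bounded_range_if_zero_outside_compact:
  fixes h :: "'a::topological_space \<Rightarrow> 'b::real_normed_vector"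
  assumes "continuous_on UNIV h" and "compact S" and "\<And>x. x \<notin> S \<Longrightarrow> h x = 0"
  shows "bounded (range h)"
proof -
  have "bounded (h ` S)"
    using assms(1,2) by (meson compact_continuous_image compact_imp_bounded continuous_on_subset subset_UNIV)
  moreover have "range h \<subseteq> insert 0 (h ` S)" using assms(3) by auto
  ultimately show ?thesis by (meson bounded_insert bounded_subset)
qed

lemma grad_eq_0_if_zero_outside_closed:
  fixes f :: "'a::euclidean_space \<Rightarrow> real"
  assumes "closed S" and "\<And>y. y \<notin> S \<Longrightarrow> f y = 0" and "x \<notin> S"
  shows "grad f x = 0"
proof -
  have "(f has_derivative (\<lambda>_. 0)) (at x)"
    by (rule has_derivative_transform_within_open[where f = "\<lambda>_. 0" and s = "- S"])
       (use assms in auto)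
  then show ?thesis by (simp add: grad_def frechet_derivative_at[symmetric])
qed

lemma test_fun_continuous_bounded:
  fixes \<phi> :: "'a::euclidean_space \<Rightarrow> real"
  assumes "test_fun \<Omega> \<phi>"
  shows "continuous_on UNIV \<phi>" "bounded (range \<phi>)"
    and "continuous_on UNIV (grad \<phi>)" "bounded (range (grad \<phi>))"
proof -
  define S where "S = closure {x. \<phi> x \<noteq> 0}"
  have smooth: "smooth_fun \<phi>" and "compact S"
    using assms by (auto simp: test_fun_def S_def)
  have zero: "\<phi> x = 0" if "x \<notin> S" for x
    using that closure_subset[of "{x. \<phi> x \<noteq> 0}"] by (auto simp: S_def)
  have "Ck 0 \<phi>" "Ck (Suc 0) \<phi>" using smooth by (auto simp: smooth_fun_def)
  then show cont: "continuous_on UNIV \<phi>" and cont_grad: "continuous_on UNIV (grad \<phi>)"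
    unfolding grad_def by (auto intro!: continuous_intros)
  show "bounded (range \<phi>)"
    by (rule bounded_range_if_zero_outside_compact[OF cont \<open>compact S\<close> zero])
  show "bounded (range (grad \<phi>))"
    using \<open>compact S\<close> zero
    by (intro bounded_range_if_zero_outside_compact[OF cont_grad \<open>compact S\<close>]
        grad_eq_0_if_zero_outside_closed[of S]) (auto intro: compact_imp_closed)
qed

lemma square_integrable_lebesgue_on_if_bounded_continuous:
  fixes f :: "'a::euclidean_space \<Rightarrow> 'b::euclidean_space"
  assumes "continuous_on UNIV f" and "bounded (range f)" and "S \<in> lmeasurable"
  shows "f \<in> borel_measurable (lebesgue_on S)" "integrable (lebesgue_on S) (\<lambda>x. (norm (f x))\<^sup>2)"
proof -
  show meas[measurable]: "f \<in> borel_measurable (lebesgue_on S)"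
    using assms(1,3) by (auto intro: continuous_imp_measurable_on_sets_lebesgue continuous_on_subset)
  obtain B where B: "\<And>x. norm (f x) \<le> B" using assms(2) by (auto simp: bounded_iff)
  have "AE x in lebesgue_on S. norm ((norm (f x))\<^sup>2) \<le> B\<^sup>2"
    using B by (intro AE_I2) (simp add: power_mono)
  then show "integrable (lebesgue_on S) (\<lambda>x. (norm (f x))\<^sup>2)"
    by (intro finite_measure.integrable_const_bound[OF finite_measure_lebesgue_on[OF assms(3)]]) auto
qed

lemma H01_lebesgue_on:
  assumes "H01 \<Omega> u G" and "\<Omega> \<in> sets lebesgue"
  shows "u \<in> borel_measurable (lebesgue_on \<Omega>)" "G \<in> borel_measurable (lebesgue_on \<Omega>)"
    and "integrable (lebesgue_on \<Omega>) (\<lambda>x. (u x)\<^sup>2)" "integrable (lebesgue_on \<Omega>) (\<lambda>x. (norm (G x))\<^sup>2)"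
  using assms
  by (auto simp: H01_def set_borel_measurable_iff_lebesgue_on set_integrable_iff_integrable_lebesgue_on)

lemma torsion_fun_energy_identity:
  fixes \<Omega> :: "'a::euclidean_space set"
  assumes "\<Omega> \<in> lmeasurable" and "torsion_fun \<Omega> v G"
  shows "(\<integral>x. (norm (G x))\<^sup>2 \<partial>lebesgue_on \<Omega>) = (\<integral>x. v x \<partial>lebesgue_on \<Omega>)"
proof -
  let ?N = "lebesgue_on \<Omega>"
  have \<Omega>: "\<Omega> \<in> sets lebesgue" using assms(1) by (rule fmeasurableD)
  have H: "H01 \<Omega> v G"
    and weak: "\<And>\<phi>. test_fun \<Omega> \<phi> \<Longrightarrow> (\<integral>x. G x \<bullet> grad \<phi> x \<partial>?N) = (\<integral>x. \<phi> x \<partial>?N)"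
    using assms(2) \<Omega> by (auto simp: torsion_fun_def set_integral_eq_integral_lebesgue_on)
  note vG[measurable] = H01_lebesgue_on[OF H \<Omega>]
  obtain \<phi> :: "nat \<Rightarrow> 'a \<Rightarrow> real" where test: "\<And>n. test_fun \<Omega> (\<phi> n)"
    and L2_fun: "(\<lambda>n. \<integral>x. (\<phi> n x - v x)\<^sup>2 \<partial>?N) \<longlonglongrightarrow> 0"
    and L2_grad: "(\<lambda>n. \<integral>x. (norm (grad (\<phi> n) x - G x))\<^sup>2 \<partial>?N) \<longlonglongrightarrow> 0"
    using H \<Omega> unfolding H01_def by (auto simp: set_integral_eq_integral_lebesgue_on)
  note \<phi>[measurable] = square_integrable_lebesgue_on_if_bounded_continuous
      [OF test_fun_continuous_bounded(1,2)[OF test] assms(1)]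
  note grad_\<phi>[measurable] = square_integrable_lebesgue_on_if_bounded_continuous
      [OF test_fun_continuous_bounded(3,4)[OF test] assms(1)]
  have one: "integrable ?N (\<lambda>x. (norm (1::real))\<^sup>2)"
    using finite_measure_lebesgue_on[OF assms(1)] by (simp add: finite_measure.integrable_const)
  have "(\<lambda>n. \<integral>x. 1 \<bullet> \<phi> n x \<partial>?N) \<longlonglongrightarrow> (\<integral>x. 1 \<bullet> v x \<partial>?N)"
    by (rule tendsto_integral_inner_if_L2_convergent[OF _ _ _ one])
       (use vG \<phi> L2_fun in auto)
  then have "(\<lambda>n. \<integral>x. \<phi> n x \<partial>?N) \<longlonglongrightarrow> (\<integral>x. v x \<partial>?N)" by simp
  moreover have "(\<lambda>n. \<integral>x. G x \<bullet> grad (\<phi> n) x \<partial>?N) \<longlonglongrightarrow> (\<integral>x. G x \<bullet> G x \<partial>?N)"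
    by (rule tendsto_integral_inner_if_L2_convergent) (use vG grad_\<phi> L2_grad in auto)
  ultimately have "(\<lambda>n. \<integral>x. \<phi> n x \<partial>?N) \<longlonglongrightarrow> (\<integral>x. (norm (G x))\<^sup>2 \<partial>?N)"
    by (simp add: weak[OF test] power2_norm_eq_inner)
  with \<open>(\<lambda>n. \<integral>x. \<phi> n x \<partial>?N) \<longlonglongrightarrow> (\<integral>x. v x \<partial>?N)\<close> show ?thesis
    by (rule LIMSEQ_unique[rotated])
qed

lemma integral_square_lebesgue_on_pos:
  fixes u :: "'a::euclidean_space \<Rightarrow> real"
  assumes "\<Omega> \<in> sets lebesgue" and "integrable (lebesgue_on \<Omega>) (\<lambda>x. (u x)\<^sup>2)"
    and "\<not> (AE x in lebesgue. x \<in> \<Omega> \<longrightarrow> u x = 0)"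
  shows "0 < (\<integral>x. (u x)\<^sup>2 \<partial>lebesgue_on \<Omega>)"
proof -
  have "\<not> (AE x in lebesgue_on \<Omega>. (u x)\<^sup>2 = 0)"
    using assms(1,3) by (simp add: AE_restrict_space_iff)
  then have "(\<integral>x. (u x)\<^sup>2 \<partial>lebesgue_on \<Omega>) \<noteq> 0"
    using integral_nonneg_eq_0_iff_AE[OF assms(2)] by simp
  moreover have "0 \<le> (\<integral>x. (u x)\<^sup>2 \<partial>lebesgue_on \<Omega>)" by (rule integral_nonneg_AE) simp
  ultimately show ?thesis by linarith
qed

lemma lambda1_le_Rayleigh_quotient:
  assumes "H01 \<Omega> u G" and "\<not> (AE x in lebesgue. x \<in> \<Omega> \<longrightarrow> u x = 0)"
  shows "0 \<le> lambda1 \<Omega>"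
    and "lambda1 \<Omega> \<le> (LINT x:\<Omega>|lebesgue. (norm (G x))\<^sup>2) / (LINT x:\<Omega>|lebesgue. (u x)\<^sup>2)"
proof -
  define R where "R = {(LINT x:\<Omega>|lebesgue. (norm (G x))\<^sup>2) / (LINT x:\<Omega>|lebesgue. (u x)\<^sup>2) | u G.
      H01 \<Omega> u G \<and> \<not> (AE x in lebesgue. x \<in> \<Omega> \<longrightarrow> u x = 0)}"
  have quotient: "(LINT x:\<Omega>|lebesgue. (norm (G x))\<^sup>2) / (LINT x:\<Omega>|lebesgue. (u x)\<^sup>2) \<in> R"
    unfolding R_def using assms by blast
  have nonneg: "0 \<le> r" if "r \<in> R" for r
    using that unfolding R_def set_lebesgue_integral_def
    by (auto intro!: divide_nonneg_nonneg integral_nonneg_AE)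
  show "0 \<le> lambda1 \<Omega>"
    unfolding lambda1_def R_def[symmetric] using quotient nonneg by (intro cInf_greatest) auto
  show "lambda1 \<Omega> \<le> (LINT x:\<Omega>|lebesgue. (norm (G x))\<^sup>2) / (LINT x:\<Omega>|lebesgue. (u x)\<^sup>2)"
    unfolding lambda1_def R_def[symmetric] using quotient nonneg
    by (intro cInf_lower) (auto simp: bdd_below_def)
qed

lemma torsion_fun_lambda1_mul_integral_square_le:
  fixes \<Omega> :: "'a::euclidean_space set"
  assumes "\<Omega> \<in> lmeasurable" and "torsion_fun \<Omega> v G"
    and "\<not> (AE x in lebesgue. x \<in> \<Omega> \<longrightarrow> v x = 0)"
  shows "lambda1 \<Omega> * (\<integral>x. (v x)\<^sup>2 \<partial>lebesgue_on \<Omega>) \<le> (\<integral>x. \<bar>v x\<bar> \<partial>lebesgue_on \<Omega>)"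
proof -
  let ?N = "lebesgue_on \<Omega>"
  have \<Omega>: "\<Omega> \<in> sets lebesgue" using assms(1) by (rule fmeasurableD)
  have H: "H01 \<Omega> v G" using assms(2) by (simp add: torsion_fun_def)
  note vG[measurable] = H01_lebesgue_on[OF H \<Omega>]
  have v: "integrable ?N v"
    by (rule finite_measure.square_integrable_imp_integrable[OF finite_measure_lebesgue_on[OF assms(1)]])
       (use vG in auto)
  have pos: "0 < (\<integral>x. (v x)\<^sup>2 \<partial>?N)"
    by (rule integral_square_lebesgue_on_pos[OF \<Omega> vG(3) assms(3)])
  have "lambda1 \<Omega> \<le> (\<integral>x. (norm (G x))\<^sup>2 \<partial>?N) / (\<integral>x. (v x)\<^sup>2 \<partial>?N)"
    using lambda1_le_Rayleigh_quotient(2)[OF H assms(3)] by (simp add: set_integral_eq_integral_lebesgue_on[OF \<Omega>])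
  then have "lambda1 \<Omega> * (\<integral>x. (v x)\<^sup>2 \<partial>?N) \<le> (\<integral>x. (norm (G x))\<^sup>2 \<partial>?N)"
    using pos by (simp add: le_divide_eq)
  also have "\<dots> = (\<integral>x. v x \<partial>?N)" by (rule torsion_fun_energy_identity[OF assms(1,2)])
  also have "\<dots> \<le> (\<integral>x. \<bar>v x\<bar> \<partial>?N)" using v by (intro integral_mono) auto
  finally show ?thesis .
qed

lemma powr_le_self_plus_square:
  fixes y p :: real
  assumes "0 \<le> y" and "1 \<le> p" and "p \<le> 2"
  shows "y powr p \<le> y + y\<^sup>2"
proof (cases "y \<le> 1")
  case True
  then have "y powr p \<le> y powr 1" using assms by (intro powr_mono') auto
  then have "y powr p \<le> y" using assms(1) by simp
  then show ?thesis using zero_le_power2[of y] by linarith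
next
  case False
  then have "y powr p \<le> y powr 2" using assms by (intro powr_mono) auto
  then show ?thesis using assms(1) by (simp add: powr_numeral)
qed

lemma powr_le_interpolation:
  fixes y lam p :: real
  assumes "0 \<le> y" and "0 < lam" and "1 \<le> p" and "p \<le> 2"
  shows "lam powr (p - 1) * y powr p \<le> (2 - p) * y + (p - 1) * (lam * y\<^sup>2)"
proof (cases "y = 0")
  case True
  then show ?thesis by simp
next
  case False
  with assms(1) have "0 < y" by simp
  have "y powr (2 - p) * (lam * y\<^sup>2) powr (p - 1) = lam powr (p - 1) * y powr p"
  proof -
    have "(lam * y\<^sup>2) powr (p - 1) = lam powr (p - 1) * y powr (2 * (p - 1))"
      using \<open>0 < y\<close> assms(2) by (simp add: powr_mult powr_powr flip: powr_numeral)
    moreover have "y powr (2 - p) * y powr (2 * (p - 1)) = y powr p"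
      by (simp add: powr_add[symmetric] algebra_simps)
    ultimately show ?thesis by (simp add: mult_ac)
  qed
  moreover have "y powr (2 - p) * (lam * y\<^sup>2) powr (p - 1) \<le> (2 - p) * y + (p - 1) * (lam * y\<^sup>2)"
    by (rule Youngs_inequality_0) (use assms \<open>0 < y\<close> in auto)
  ultimately show ?thesis by simp
qed

lemma integrable_abs_powr:
  fixes v :: "'a \<Rightarrow> real"
  assumes [measurable]: "v \<in> borel_measurable M"
    and "integrable M v" "integrable M (\<lambda>x. (v x)\<^sup>2)" "1 \<le> p" "p \<le> 2"
  shows "integrable M (\<lambda>x. \<bar>v x\<bar> powr p)"
proof (rule Bochner_Integration.integrable_bound)
  show "integrable M (\<lambda>x. \<bar>v x\<bar> + (v x)\<^sup>2)" using assms by simp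
  show "AE x in M. norm (\<bar>v x\<bar> powr p) \<le> norm (\<bar>v x\<bar> + (v x)\<^sup>2)"
    using powr_le_self_plus_square[of "\<bar>v x\<bar>" p for x] assms(4,5) by (intro AE_I2) simp
qed measurable

lemma integral_abs_powr_interpolation:
  fixes v :: "'a \<Rightarrow> real"
  assumes [measurable]: "v \<in> borel_measurable M"
    and v: "integrable M v" and v2: "integrable M (\<lambda>x. (v x)\<^sup>2)"
    and "0 < lam" "1 \<le> p" "p \<le> 2"
  shows "lam powr (p - 1) * (\<integral>x. \<bar>v x\<bar> powr p \<partial>M)
    \<le> (2 - p) * (\<integral>x. \<bar>v x\<bar> \<partial>M) + (p - 1) * (lam * (\<integral>x. (v x)\<^sup>2 \<partial>M))"
proof -
  have "lam powr (p - 1) * (\<integral>x. \<bar>v x\<bar> powr p \<partial>M) = (\<integral>x. lam powr (p - 1) * \<bar>v x\<bar> powr p \<partial>M)"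
    by simp
  also have "\<dots> \<le> (\<integral>x. (2 - p) * \<bar>v x\<bar> + (p - 1) * (lam * (v x)\<^sup>2) \<partial>M)"
  proof (rule integral_mono)
    show "integrable M (\<lambda>x. lam powr (p - 1) * \<bar>v x\<bar> powr p)"
      using integrable_abs_powr[OF assms(1) v v2] assms(5,6) by simp
    show "integrable M (\<lambda>x. (2 - p) * \<bar>v x\<bar> + (p - 1) * (lam * (v x)\<^sup>2))"
      using v v2 by simp
    show "lam powr (p - 1) * \<bar>v x\<bar> powr p \<le> (2 - p) * \<bar>v x\<bar> + (p - 1) * (lam * (v x)\<^sup>2)" for x
      using powr_le_interpolation[of "\<bar>v x\<bar>" lam p] assms(4-6) by simp
  qed
  also have "\<dots> = (2 - p) * (\<integral>x. \<bar>v x\<bar> \<partial>M) + (p - 1) * (lam * (\<integral>x. (v x)\<^sup>2 \<partial>M))"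
    by (subst Bochner_Integration.integral_add) (use v v2 in auto)
  finally show ?thesis .
qed

lemma (in finite_measure) integral_abs_square_le:
  fixes v :: "'a \<Rightarrow> real"
  assumes [measurable]: "v \<in> borel_measurable M" and "integrable M (\<lambda>x. (v x)\<^sup>2)"
  shows "(\<integral>x. \<bar>v x\<bar> \<partial>M)\<^sup>2 \<le> measure M (space M) * (\<integral>x. (v x)\<^sup>2 \<partial>M)"
proof -
  have "integrable M (\<lambda>x. ((\<lambda>_. 1::real) x)\<^sup>2)" by simp
  from Cauchy_Schwarz_integral[OF assms(1) _ assms(2) this]
  show ?thesis by (simp add: mult.commute)
qed

lemma (in finite_measure) Lp_interpolation_bounds:
  fixes v :: "'a \<Rightarrow> real" and lam p :: real
  defines "A \<equiv> \<integral>x. \<bar>v x\<bar> \<partial>M" and "\<mu> \<equiv> measure M (space M)"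
  assumes [measurable]: "v \<in> borel_measurable M" and v2: "integrable M (\<lambda>x. (v x)\<^sup>2)"
    and lam: "0 \<le> lam" and Rayleigh: "lam * (\<integral>x. (v x)\<^sup>2 \<partial>M) \<le> A"
    and p: "1 \<le> p" "p \<le> 2"
  shows "(\<integral>x. \<bar>v x\<bar> powr p \<partial>M) powr (1 / p) * lam / \<mu> powr (1 / p) \<le> (A * lam / \<mu>) powr (1 / p)"
    and "(A * lam / \<mu>) powr (1 / p) \<le> 1"
proof -
  define B where "B = (\<integral>x. \<bar>v x\<bar> powr p \<partial>M)"
  have v: "integrable M v" using assms(3) v2 by (rule square_integrable_imp_integrable)
  have "0 \<le> A" unfolding A_def by (rule integral_nonneg_AE) simp
  have "0 \<le> B" unfolding B_def by (rule integral_nonneg_AE) simp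
  have "0 \<le> \<mu>" unfolding \<mu>_def by (rule measure_nonneg)
  have "lam * A \<le> \<mu>"
  proof (cases "A = 0")
    case False
    with \<open>0 \<le> A\<close> have "0 < A" by simp
    have "lam * A * A \<le> lam * (\<mu> * (\<integral>x. (v x)\<^sup>2 \<partial>M))"
      using integral_abs_square_le[OF assms(3) v2] lam unfolding A_def \<mu>_def
      by (simp add: mult_left_mono power2_eq_square mult.assoc)
    also have "\<dots> \<le> \<mu> * A" using Rayleigh \<open>0 \<le> \<mu>\<close> by (simp add: mult_left_mono mult.left_commute)
    finally show ?thesis using \<open>0 < A\<close> by simp
  qed (use \<open>0 \<le> \<mu>\<close> in simp)
  then show "(A * lam / \<mu>) powr (1 / p) \<le> 1"
    using \<open>0 \<le> A\<close> lam \<open>0 \<le> \<mu>\<close> p by (intro powr_le1) (auto simp: divide_le_eq mult.commute)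
  have "B powr (1 / p) * lam \<le> (A * lam) powr (1 / p)"
  proof (cases "lam = 0")
    case False
    with lam have "0 < lam" by simp
    have "lam powr (p - 1) * B \<le> (2 - p) * A + (p - 1) * (lam * (\<integral>x. (v x)\<^sup>2 \<partial>M))"
      using integral_abs_powr_interpolation[OF assms(3) v v2 \<open>0 < lam\<close> p]
      unfolding A_def B_def .
    also have "\<dots> \<le> (2 - p) * A + (p - 1) * A"
      using Rayleigh p by (intro add_left_mono mult_left_mono) auto
    also have "\<dots> = A" by (simp add: algebra_simps)
    finally have "lam * (lam powr (p - 1) * B) \<le> lam * A"
      using lam by (rule mult_left_mono)
    moreover have "lam * lam powr (p - 1) = lam powr p"
      using \<open>0 < lam\<close> by (simp add: powr_mult_base)
    ultimately have "B * lam powr p \<le> A * lam" by (metis mult.assoc mult.commute)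
    then have "(B * lam powr p) powr (1 / p) \<le> (A * lam) powr (1 / p)"
      using \<open>0 \<le> B\<close> p by (intro powr_mono2) auto
    then show ?thesis using \<open>0 < lam\<close> \<open>0 \<le> B\<close> p by (simp add: powr_mult powr_powr)
  qed simp
  then show "B powr (1 / p) * lam / \<mu> powr (1 / p) \<le> (A * lam / \<mu>) powr (1 / p)"
    using \<open>0 \<le> A\<close> lam \<open>0 \<le> \<mu>\<close> by (simp add: powr_divide divide_right_mono)
qed

theorem theorem1:
  fixes \<Omega> :: "'a::euclidean_space set" and v :: "'a \<Rightarrow> real" and G :: "'a \<Rightarrow> 'a" and p :: real
  assumes "open \<Omega>" and "\<Omega> \<noteq> {}" and "emeasure lebesgue \<Omega> < \<infinity>"
    and "torsion_fun \<Omega> v G"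
    and "1 \<le> p" and "p \<le> 2"
  shows "Fp p \<Omega> v \<le> (Fp 1 \<Omega> v) powr (1 / p) \<and> (Fp 1 \<Omega> v) powr (1 / p) \<le> 1"
proof -
  have \<Omega>: "\<Omega> \<in> sets lebesgue" using assms(1) by (metis borel_open sets_completionI_sets sets_lborel)
  with assms(3) have "\<Omega> \<in> lmeasurable" by (simp add: fmeasurable_def)
  interpret finite_measure "lebesgue_on \<Omega>" using \<open>\<Omega> \<in> lmeasurable\<close> by (rule finite_measure_lebesgue_on)
  note vG[measurable] = H01_lebesgue_on[OF conjunct1[OF assms(4)[unfolded torsion_fun_def]] \<Omega>]
  have Fp_eq: "Fp q \<Omega> v = (\<integral>x. \<bar>v x\<bar> powr q \<partial>lebesgue_on \<Omega>) powr (1 / q) * lambda1 \<Omega>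
      / measure (lebesgue_on \<Omega>) (space (lebesgue_on \<Omega>)) powr (1 / q)" for q
    using \<Omega> by (simp add: Fp_def Tp_def set_integral_eq_integral_lebesgue_on measure_restrict_space)
  show ?thesis
  proof (cases "AE x in lebesgue. x \<in> \<Omega> \<longrightarrow> v x = 0")
    case True
    \<comment> \<open>here \<open>lambda1 \<Omega>\<close> may be the junk value \<open>Inf {}\<close>, but both sides vanish\<close>
    then have "AE x in lebesgue_on \<Omega>. \<bar>v x\<bar> powr q = 0" for q
      using \<Omega> by (simp add: AE_restrict_space_iff)
    then have "Fp q \<Omega> v = 0" for q
      unfolding Fp_eq by (simp add: integral_eq_zero_AE)
    then show ?thesis using assms(5) by simp
  next
    case False
    have "0 \<le> lambda1 \<Omega>"
      using lambda1_le_Rayleigh_quotient(1) assms(4) False by (auto simp: torsion_fun_def)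
    from Lp_interpolation_bounds[OF vG(1,3) this
        torsion_fun_lambda1_mul_integral_square_le[OF \<open>\<Omega> \<in> lmeasurable\<close> assms(4) False] assms(5,6)]
    show ?thesis unfolding Fp_eq by simp
  qed
qed

end
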